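(* Let $g\ge1$, $n=g+1$, $k\in\{1,\dots,g\}$, $I_k=\{1,\dots,k\}$, $\kappa_1,\dots,\kappa_n\in\mathbb C$ pairwise distinct, $\beta_1,\dots,\beta_g,\lambda_1,\dots,\lambda_g\in\mathbb C^*$, $\beta_0=\lambda_0=1$. Let $A$ be the $k\times n$ matrix with $A_{ij}=\delta_{ij}$ for $j\le k$ and $A_{ij}=\frac{\beta_{i-1}}{\beta_{j-1}(\kappa_j-\kappa_i)^2}\prod_{l\in I_k,l\ne i}\frac{\kappa_i-\kappa_l}{\kappa_j-\kappa_l}$ for $i\le k<j$, and let $\tilde A=V\cdot\mathrm{diag}(1,\lambda_1,\dots,\lambda_g)$ with $V_{ij}=\kappa_j^{i-1}$. Then $A$ and $\tilde A$ have the same row space (represent the same point of $\mathrm{Gr}(k,n)$) if and only if for all $j\in[g]$ $$\beta_j=\lambda_j^{-1}\,\exp\Big[\tfrac k2R_{jj}-\sum_{l=1}^{k-1}R_{jl}\Big].$$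
   Context: $R$ is the $g\times g$ symmetric matrix with $R_{ii}=-2\log(\kappa_{i+1}-\kappa_1)^2$ and $R_{ij}=\log\frac{(\kappa_{i+1}-\kappa_{j+1})^2}{(\kappa_{i+1}-\kappa_1)^2(\kappa_{j+1}-\kappa_1)^2}$ for $i\ne j$ (the limit period matrix of the degenerating hyperelliptic curves $y^2=\prod_i(x-\kappa_i-\varepsilon)(x-\kappa_i+\varepsilon)$); the right-hand side is independent of the branch of $\log$, e.g. $\exp[\tfrac12R_{jj}]=(\kappa_{j+1}-\kappa_1)^{-2}$. *)

theory Defs
  imports "HOL-Analysis.Analysis"
begin

text \<open>Matrices are functions on 1-based indices; a k x n matrix M is M i j for
  i in {1..k}, j in {1..n}.\<close>

definition row_space :: "nat \<Rightarrow> nat \<Rightarrow> (nat \<Rightarrow> nat \<Rightarrow> complex) \<Rightarrow> (nat \<Rightarrow> complex) set" where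
  "row_space k n M =
     {(\<lambda>j. if j \<in> {1..n} then (\<Sum>i=1..k. c i * M i j) else 0) | c. True}"

definition matA :: "nat \<Rightarrow> (nat \<Rightarrow> complex) \<Rightarrow> (nat \<Rightarrow> complex) \<Rightarrow> nat \<Rightarrow> nat \<Rightarrow> complex" where
  "matA k \<kappa> \<beta> i j =
     (if j \<le> k then (if i = j then 1 else 0)
      else \<beta> (i - 1) / (\<beta> (j - 1) * (\<kappa> j - \<kappa> i)^2) *
           (\<Prod>l\<in>{1..k} - {i}. (\<kappa> i - \<kappa> l) / (\<kappa> j - \<kappa> l)))"

text \<open>The matrix A~ = V * diag(1, lambda_1, ..., lambda_g), V i j = kappa_j^(i-1)
  (with lambda_0 = 1 assumed separately).\<close>
definition matAt :: "(nat \<Rightarrow> complex) \<Rightarrow> (nat \<Rightarrow> complex) \<Rightarrow> nat \<Rightarrow> nat \<Rightarrow> complex" where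
  "matAt \<kappa> lam i j = \<kappa> j ^ (i - 1) * lam (j - 1)"

definition Rmat :: "(nat \<Rightarrow> complex) \<Rightarrow> nat \<Rightarrow> nat \<Rightarrow> complex" where
  "Rmat \<kappa> i j =
     (if i = j then - 2 * ln ((\<kappa> (i+1) - \<kappa> 1)^2)
      else ln ((\<kappa> (i+1) - \<kappa> (j+1))^2 / ((\<kappa> (i+1) - \<kappa> 1)^2 * (\<kappa> (j+1) - \<kappa> 1)^2)))"

end

theory Submission
  imports Defs "HOL-Computational_Algebra.Polynomial"
begin

(* The row space of A~ = V diag(1, lambda_1, ..., lambda_g) consists of the vectors
   (lambda_(j-1) p(kappa_j))_j with deg p < k.  Since A = [I | B] is in reduced echelon form,
   the two row spaces agree iff the i-th row of A is such a vector, namely the one of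
   L_i / lambda_(i-1), where L_i is the Lagrange basis polynomial for the nodes
   kappa_1, ..., kappa_k.  Writing G_t = prod_(l <= k, l ~= t) (kappa_t - kappa_l)^2, the
   entrywise condition A_ij = lambda_(j-1) / lambda_(i-1) L_i(kappa_j) says exactly that
   beta_(t-1) lambda_(t-1) G_t does not depend on t.  Normalising at t = 1 gives
   beta_j lambda_j = G_1 / G_(j+1), and G_1 / G_(j+1) is the exponential of the stated
   combination of entries of R (only exp (ln z) = z is used, so the branch of the logarithm
   is irrelevant). *)

definition lagrange_basis :: "'b set \<Rightarrow> ('b \<Rightarrow> 'a::field) \<Rightarrow> 'b \<Rightarrow> 'a poly" where
  "lagrange_basis X x i =
     smult (inverse (\<Prod>l\<in>X - {i}. x i - x l)) (\<Prod>l\<in>X - {i}. [:- x l, 1:])"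

lemma poly_lagrange_basis:
  "poly (lagrange_basis X x i) y = (\<Prod>l\<in>X - {i}. (y - x l) / (x i - x l))"
  by (simp add: lagrange_basis_def poly_prod prod_dividef field_simps)

lemma degree_lagrange_basis:
  assumes "finite X" "i \<in> X"
  shows "degree (lagrange_basis X x i) < card X"
proof -
  have "degree (lagrange_basis X x i) \<le> degree (\<Prod>l\<in>X - {i}. [:- x l, 1:])"
    unfolding lagrange_basis_def by (rule degree_smult_le)
  also have "\<dots> \<le> card (X - {i})"
    using degree_prod_sum_le[of "X - {i}" "\<lambda>l. [:- x l, 1:]"] assms by simp
  also have "\<dots> < card X"
    using assms by (rule card_Diff1_less)
  finally show ?thesis .
qed

lemma poly_lagrange_basis_node:
  assumes "finite X" "inj_on x X" "i \<in> X" "j \<in> X"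
  shows "poly (lagrange_basis X x i) (x j) = (if i = j then 1 else 0)"
proof (cases "i = j")
  case True
  have "x i - x l \<noteq> 0" if "l \<in> X - {i}" for l
    using assms that by (auto dest: inj_onD)
  with True show ?thesis
    by (simp add: poly_lagrange_basis)
next
  case False
  with assms show ?thesis
    by (auto simp: poly_lagrange_basis intro!: prod_zero bexI[of _ j])
qed

lemma degree_lagrange_combination:
  assumes "finite X" "X \<noteq> {}"
  shows "degree (\<Sum>i\<in>X. smult (c i) (lagrange_basis X x i)) < card X"
proof (rule degree_sum_less)
  show "degree (smult (c i) (lagrange_basis X x i)) < card X" if "i \<in> X" for i
    using le_less_trans[OF degree_smult_le degree_lagrange_basis[OF assms(1) that]] .
qed (use assms in \<open>simp add: card_gt_0_iff\<close>)

lemma lagrange_interpolation: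
  assumes "finite X" "inj_on x X" "degree p < card X"
  shows "p = (\<Sum>i\<in>X. smult (poly p (x i)) (lagrange_basis X x i))"
proof -
  have card_nodes: "card (x ` X) = card X"
    using assms(2) by (rule card_image)
  have "X \<noteq> {}"
    using assms(3) by (metis card.empty not_less0)
  show ?thesis
  proof (rule poly_eqI_degree[of "x ` X"])
    fix y assume "y \<in> x ` X"
    then obtain j where j: "j \<in> X" "y = x j" by blast
    have "poly (\<Sum>i\<in>X. smult (poly p (x i)) (lagrange_basis X x i)) y =
        (\<Sum>i\<in>X. poly p (x i) * poly (lagrange_basis X x i) (x j))"
      by (simp add: poly_sum j(2))
    also have "\<dots> = (\<Sum>i\<in>X. if i = j then poly p (x i) else 0)"
      using assms(1,2) j(1) by (intro sum.cong refl) (simp add: poly_lagrange_basis_node)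
    also have "\<dots> = poly p y"
      using assms(1) j by simp
    finally show "poly p y = poly (\<Sum>i\<in>X. smult (poly p (x i)) (lagrange_basis X x i)) y"
      by simp
  next
    show "degree p < card (x ` X)"
      using assms(3) card_nodes by simp
    show "degree (\<Sum>i\<in>X. smult (poly p (x i)) (lagrange_basis X x i)) < card (x ` X)"
      using degree_lagrange_combination[OF assms(1) \<open>X \<noteq> {}\<close>] card_nodes by simp
  qed
qed

lemma span_lagrange_basis:
  fixes x :: "'b \<Rightarrow> 'a::field"
  assumes "finite X" "X \<noteq> {}" "inj_on x X"
  shows "range (\<lambda>c. \<Sum>i\<in>X. smult (c i) (lagrange_basis X x i)) = {p. degree p < card X}"
proof (intro equalityI subsetI)
  fix p :: "'a poly" assume "p \<in> {p. degree p < card X}"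
  then have "p = (\<Sum>i\<in>X. smult (poly p (x i)) (lagrange_basis X x i))"
    using lagrange_interpolation[OF assms(1,3)] by simp
  then show "p \<in> range (\<lambda>c. \<Sum>i\<in>X. smult (c i) (lagrange_basis X x i))"
    by (intro range_eqI[where x = "\<lambda>i. poly p (x i)"])
qed (use degree_lagrange_combination[OF assms(1,2)] in auto)

definition weighted_evaluation ::
    "nat \<Rightarrow> (nat \<Rightarrow> complex) \<Rightarrow> (nat \<Rightarrow> complex) \<Rightarrow> complex poly \<Rightarrow>
     nat \<Rightarrow> complex" where
  "weighted_evaluation n \<kappa> lam p =
     (\<lambda>j. if j \<in> {1..n} then lam (j - 1) * poly p (\<kappa> j) else 0)"

lemma row_space_poly_rows:
  assumes "\<forall>i\<in>{1..k}. \<forall>j\<in>{1..n}. M i j = lam (j - 1) * poly (q i) (\<kappa> j)"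
  shows "row_space k n M =
    weighted_evaluation n \<kappa> lam ` range (\<lambda>c. \<Sum>i=1..k. smult (c i) (q i))"
proof -
  have "(\<lambda>j. if j \<in> {1..n} then \<Sum>i=1..k. c i * M i j else 0) =
      weighted_evaluation n \<kappa> lam (\<Sum>i=1..k. smult (c i) (q i))" for c
    using assms by (auto simp: weighted_evaluation_def poly_sum sum_distrib_left mult_ac
                         intro!: sum.cong)
  then show ?thesis
    unfolding row_space_def by auto
qed

lemma span_monomials:
  assumes "1 \<le> k"
  shows "range (\<lambda>c. \<Sum>i=1..k. smult (c i) (monom 1 (i - 1))) =
    {p :: 'a::comm_ring_1 poly. degree p < k}"
proof (intro equalityI subsetI)
  fix p :: "'a poly" assume "p \<in> {p. degree p < k}"
  then have "p = (\<Sum>i\<le>k - 1. monom (coeff p i) i)"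
    by (simp add: poly_as_sum_of_monoms')
  also have "\<dots> = (\<Sum>i=1..k. smult (coeff p (i - 1)) (monom 1 (i - 1)))"
    using assms by (simp add: sum.atLeast1_atMost_eq smult_monom lessThan_Suc_atMost[symmetric])
  finally show "p \<in> range (\<lambda>c. \<Sum>i=1..k. smult (c i) (monom 1 (i - 1)))"
    by (intro range_eqI[where x = "\<lambda>i. coeff p (i - 1)"])
qed (use assms in \<open>auto intro!: degree_sum_less le_less_trans[OF degree_smult_le]
                                  le_less_trans[OF degree_monom_le]\<close>)

lemma row_space_matAt:
  assumes "1 \<le> k"
  shows "row_space k n (matAt \<kappa> lam) = weighted_evaluation n \<kappa> lam ` {p. degree p < k}"
  unfolding span_monomials[OF assms, symmetric]
  by (rule row_space_poly_rows) (simp add: matAt_def poly_monom)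

lemma row_space_unit_block_coords:
  assumes "\<forall>i\<in>{1..k}. \<forall>j\<in>{1..k}. M i j = (if i = j then 1 else 0)" "k \<le> n"
    and "v \<in> row_space k n M" "j \<in> {1..n}"
  shows "v j = (\<Sum>i=1..k. v i * M i j)"
proof -
  obtain c where v: "v = (\<lambda>j. if j \<in> {1..n} then \<Sum>i=1..k. c i * M i j else 0)"
    using assms(3) unfolding row_space_def by blast
  have "v i = c i" if "i \<in> {1..k}" for i
    using assms(1,2) that by (simp add: v if_distrib[of "\<lambda>t. c _ * t"] cong: if_cong)
  then show ?thesis
    using assms(4) by (simp add: v)
qed

lemma range_sum_smult_rescale:
  fixes q :: "'b \<Rightarrow> 'a::field poly"
  assumes "\<forall>i\<in>X. w i \<noteq> 0"
  shows "range (\<lambda>c. \<Sum>i\<in>X. smult (c i) (smult (w i) (q i))) =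
    range (\<lambda>c. \<Sum>i\<in>X. smult (c i) (q i))"
proof (intro equalityI subsetI)
  fix p assume "p \<in> range (\<lambda>c. \<Sum>i\<in>X. smult (c i) (smult (w i) (q i)))"
  then obtain c where "p = (\<Sum>i\<in>X. smult (c i * w i) (q i))"
    by auto
  then show "p \<in> range (\<lambda>c. \<Sum>i\<in>X. smult (c i) (q i))"
    by (intro range_eqI[where x = "\<lambda>i. c i * w i"])
next
  fix p assume "p \<in> range (\<lambda>c. \<Sum>i\<in>X. smult (c i) (q i))"
  then obtain c where "p = (\<Sum>i\<in>X. smult (c i) (q i))"
    by auto
  also have "\<dots> = (\<Sum>i\<in>X. smult (c i / w i) (smult (w i) (q i)))"
    using assms by (intro sum.cong) auto
  finally show "p \<in> range (\<lambda>c. \<Sum>i\<in>X. smult (c i) (smult (w i) (q i)))"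
    by (intro range_eqI[where x = "\<lambda>i. c i / w i"])
qed

lemma lagrange_rows_if_row_space_eq:
  assumes "1 \<le> k" "k \<le> n" "inj_on \<kappa> {1..k}" "\<forall>j\<in>{1..n}. lam (j - 1) \<noteq> 0"
    and unit_block: "\<forall>i\<in>{1..k}. \<forall>j\<in>{1..k}. M i j = (if i = j then 1 else 0)"
    and "row_space k n M = row_space k n (matAt \<kappa> lam)" "i \<in> {1..k}" "j \<in> {1..n}"
  shows "M i j = lam (j - 1) / lam (i - 1) * poly (lagrange_basis {1..k} \<kappa> i) (\<kappa> j)"
proof -
  define p where "p = smult (inverse (lam (i - 1))) (lagrange_basis {1..k} \<kappa> i)"
  define v where "v = weighted_evaluation n \<kappa> lam p"
  have "degree p < k"
    using degree_lagrange_basis[of "{1..k}" i \<kappa>] assms(7) by (simp add: p_def)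
  then have "v \<in> row_space k n M"
    using assms(6) by (simp add: v_def row_space_matAt[OF assms(1)])
  then have "v j = (\<Sum>i'=1..k. v i' * M i' j)"
    by (rule row_space_unit_block_coords[OF unit_block assms(2) _ assms(8)])
  also have "\<dots> = (\<Sum>i'=1..k. if i' = i then M i' j else 0)"
  proof (intro sum.cong refl)
    fix i' assume "i' \<in> {1..k}"
    then have "v i' = (if i = i' then 1 else 0)"
      using assms(2-4,7) by (auto simp: v_def p_def weighted_evaluation_def poly_lagrange_basis_node)
    then show "v i' * M i' j = (if i' = i then M i' j else 0)"
      by simp
  qed
  finally show ?thesis
    using assms(7,8) by (simp add: v_def p_def weighted_evaluation_def field_simps)
qed

lemma row_space_lagrange_rows:
  assumes "1 \<le> k" "inj_on \<kappa> {1..k}" "\<forall>i\<in>{1..k}. lam (i - 1) \<noteq> 0"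
    and "\<forall>i\<in>{1..k}. \<forall>j\<in>{1..n}.
      M i j = lam (j - 1) / lam (i - 1) * poly (lagrange_basis {1..k} \<kappa> i) (\<kappa> j)"
  shows "row_space k n M = row_space k n (matAt \<kappa> lam)"
proof -
  let ?L = "lagrange_basis {1..k} \<kappa>"
  let ?q = "\<lambda>i. smult (inverse (lam (i - 1))) (?L i)"
  have "\<forall>i\<in>{1..k}. \<forall>j\<in>{1..n}. M i j = lam (j - 1) * poly (?q i) (\<kappa> j)"
    using assms(4) by (simp add: divide_inverse mult_ac)
  then have "row_space k n M =
      weighted_evaluation n \<kappa> lam ` range (\<lambda>c. \<Sum>i=1..k. smult (c i) (?q i))"
    by (rule row_space_poly_rows)
  also have "range (\<lambda>c. \<Sum>i=1..k. smult (c i) (?q i)) =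
      range (\<lambda>c. \<Sum>i=1..k. smult (c i) (?L i))"
    using assms(3) by (intro range_sum_smult_rescale) simp
  also have "\<dots> = {p. degree p < k}"
    using span_lagrange_basis[of "{1..k}" \<kappa>] assms(1,2) by simp
  finally show ?thesis
    by (simp add: row_space_matAt[OF assms(1)])
qed

lemma row_space_matA_eq_matAt_iff:
  assumes "1 \<le> k" "k \<le> n" "inj_on \<kappa> {1..k}" "\<forall>j\<in>{1..n}. lam (j - 1) \<noteq> 0"
  shows "row_space k n (matA k \<kappa> \<beta>) = row_space k n (matAt \<kappa> lam) \<longleftrightarrow>
    (\<forall>i\<in>{1..k}. \<forall>j\<in>{k<..n}.
       matA k \<kappa> \<beta> i j = lam (j - 1) / lam (i - 1) * poly (lagrange_basis {1..k} \<kappa> i) (\<kappa> j))"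
proof -
  have unit_block: "\<forall>i\<in>{1..k}. \<forall>j\<in>{1..k}. matA k \<kappa> \<beta> i j = (if i = j then 1 else 0)"
    by (simp add: matA_def)
  have lam_nz: "\<forall>i\<in>{1..k}. lam (i - 1) \<noteq> 0"
    using assms(2,4) by auto
  have on_unit_block:
    "matA k \<kappa> \<beta> i j = lam (j - 1) / lam (i - 1) * poly (lagrange_basis {1..k} \<kappa> i) (\<kappa> j)"
    if "i \<in> {1..k}" "j \<in> {1..k}" for i j
    using that assms(3) lam_nz by (auto simp: matA_def poly_lagrange_basis_node)
  show ?thesis
  proof
    assume "row_space k n (matA k \<kappa> \<beta>) = row_space k n (matAt \<kappa> lam)"
    then show "\<forall>i\<in>{1..k}. \<forall>j\<in>{k<..n}.
      matA k \<kappa> \<beta> i j = lam (j - 1) / lam (i - 1) * poly (lagrange_basis {1..k} \<kappa> i) (\<kappa> j)"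
      using assms(1) by (intro ballI lagrange_rows_if_row_space_eq[OF assms unit_block]) auto
  next
    assume beyond_block: "\<forall>i\<in>{1..k}. \<forall>j\<in>{k<..n}.
      matA k \<kappa> \<beta> i j = lam (j - 1) / lam (i - 1) * poly (lagrange_basis {1..k} \<kappa> i) (\<kappa> j)"
    show "row_space k n (matA k \<kappa> \<beta>) = row_space k n (matAt \<kappa> lam)"
    proof (intro row_space_lagrange_rows[OF assms(1,3) lam_nz] ballI)
      fix i j assume "i \<in> {1..k}" "j \<in> {1..n}"
      then show "matA k \<kappa> \<beta> i j =
          lam (j - 1) / lam (i - 1) * poly (lagrange_basis {1..k} \<kappa> i) (\<kappa> j)"
        using on_unit_block beyond_block by (cases "j \<le> k") auto
    qed
  qed
qed

definition prod_sq_gaps :: "nat \<Rightarrow> (nat \<Rightarrow> complex) \<Rightarrow> nat \<Rightarrow> complex" where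
  "prod_sq_gaps k \<kappa> t = (\<Prod>l\<in>{1..k} - {t}. (\<kappa> t - \<kappa> l)^2)"

lemma prod_sq_gaps_nonzero:
  assumes "inj_on \<kappa> {1..n}" "k \<le> n" "t \<in> {1..n}"
  shows "prod_sq_gaps k \<kappa> t \<noteq> 0"
  using assms by (auto simp: prod_sq_gaps_def dest: inj_onD)

lemma matA_eq_lagrange_iff:
  assumes "inj_on \<kappa> {1..n}" "i \<in> {1..k}" "j \<in> {k<..n}"
    and "\<beta> (j - 1) \<noteq> 0" "lam (i - 1) \<noteq> 0"
  shows "matA k \<kappa> \<beta> i j = lam (j - 1) / lam (i - 1) * poly (lagrange_basis {1..k} \<kappa> i) (\<kappa> j)
    \<longleftrightarrow> \<beta> (i - 1) * lam (i - 1) * prod_sq_gaps k \<kappa> i =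
        \<beta> (j - 1) * lam (j - 1) * prod_sq_gaps k \<kappa> j"
proof -
  define a where "a = (\<Prod>l\<in>{1..k} - {i}. \<kappa> i - \<kappa> l)"
  define b where "b = (\<Prod>l\<in>{1..k} - {i}. \<kappa> j - \<kappa> l)"
  define d where "d = \<kappa> j - \<kappa> i"
  have "a \<noteq> 0" "b \<noteq> 0" "d \<noteq> 0"
    using assms(1-3) by (auto simp: a_def b_def d_def dest: inj_onD)
  have "j \<notin> {1..k}"
    using assms(3) by simp
  have matA_ij: "matA k \<kappa> \<beta> i j = \<beta> (i - 1) / (\<beta> (j - 1) * d^2) * (a / b)"
    using assms(3) by (simp add: matA_def a_def b_def d_def prod_dividef)
  have lagrange_ij: "poly (lagrange_basis {1..k} \<kappa> i) (\<kappa> j) = b / a"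
    by (simp add: poly_lagrange_basis a_def b_def prod_dividef)
  have gaps_i: "prod_sq_gaps k \<kappa> i = a^2"
    by (simp add: prod_sq_gaps_def a_def prod_power_distrib)
  have "prod_sq_gaps k \<kappa> j = (\<Prod>l\<in>{1..k}. (\<kappa> j - \<kappa> l)^2)"
    using \<open>j \<notin> {1..k}\<close> by (simp add: prod_sq_gaps_def)
  also have "\<dots> = (\<kappa> j - \<kappa> i)^2 * (\<Prod>l\<in>{1..k} - {i}. (\<kappa> j - \<kappa> l)^2)"
    using assms(2) by (intro prod.remove) auto
  also have "\<dots> = d^2 * b^2"
    by (simp add: d_def b_def prod_power_distrib)
  finally have gaps_j: "prod_sq_gaps k \<kappa> j = d^2 * b^2" .
  have field_identity: "bi / (bj * d^2) * (a / b) = lj / li * (b / a) \<longleftrightarrow>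
      bi * li * a^2 = bj * lj * (d^2 * b^2)"
    if "bj \<noteq> 0" "li \<noteq> 0" for bi bj li lj :: complex
    using that \<open>a \<noteq> 0\<close> \<open>b \<noteq> 0\<close> \<open>d \<noteq> 0\<close>
    by (simp add: divide_simps) (simp add: algebra_simps power2_eq_square)
  show ?thesis
    unfolding matA_ij lagrange_ij gaps_i gaps_j
    using assms(4,5) by (rule field_identity)
qed

lemma eq_across_cut_iff_constant:
  fixes k n :: nat
  assumes "1 \<le> k" "k < n"
  shows "(\<forall>i\<in>{1..k}. \<forall>j\<in>{k<..n}. H i = H j) \<longleftrightarrow> (\<forall>t\<in>{1..n}. H t = H 1)"
proof
  assume cut: "\<forall>i\<in>{1..k}. \<forall>j\<in>{k<..n}. H i = H j"
  show "\<forall>t\<in>{1..n}. H t = H 1"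
  proof
    fix t assume t: "t \<in> {1..n}"
    show "H t = H 1"
    proof (cases "t \<le> k")
      case True
      then have "H t = H n" "H 1 = H n"
        using cut assms t by auto
      then show ?thesis by simp
    next
      case False
      then have "H 1 = H t"
        using cut assms t by auto
      then show ?thesis by simp
    qed
  qed
next
  assume const: "\<forall>t\<in>{1..n}. H t = H 1"
  show "\<forall>i\<in>{1..k}. \<forall>j\<in>{k<..n}. H i = H j"
  proof (intro ballI)
    fix i j assume "i \<in> {1..k}" "j \<in> {k<..n}"
    then have "i \<in> {1..n}" "j \<in> {1..n}"
      using assms by auto
    then show "H i = H j"
      using const by metis
  qed
qed

lemma ball_atLeastAtMost_Suc_iff:
  "(\<forall>t\<in>{1..Suc g}. P t) \<longleftrightarrow> P 1 \<and> (\<forall>m\<in>{1..g}. P (Suc m))"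
proof -
  have "{1..Suc g} = insert 1 (Suc ` {1..g})"
    by (simp add: atLeastAtMost_insertL)
  then show ?thesis
    by (simp only: ball_simps(7,9))
qed

lemma prod_sq_gaps_split_first:
  assumes "1 \<le> k"
  shows "prod_sq_gaps k \<kappa> t = (if t = 1 then 1 else (\<kappa> t - \<kappa> 1)^2) *
    (\<Prod>l=1..k-1. if t = Suc l then 1 else (\<kappa> t - \<kappa> (Suc l))^2)"
proof -
  define h where "h l = (if t = l then 1 else (\<kappa> t - \<kappa> l)^2)" for l
  have "prod_sq_gaps k \<kappa> t = (\<Prod>l=1..k. h l)"
    by (simp add: prod_sq_gaps_def h_def prod.If_cases Diff_eq)
  also have "\<dots> = h 1 * (\<Prod>l=Suc 1..k. h l)"
    using assms by (rule prod.atLeast_Suc_atMost)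
  also have "\<dots> = h 1 * (\<Prod>l=1..k-1. h (Suc l))"
    using assms prod.shift_bounds_cl_Suc_ivl[of h 1 "k - 1"] by simp
  finally show ?thesis
    by (simp only: h_def)
qed

lemma exp_half_multiple_Rmat_diag:
  assumes "\<kappa> (m + 1) \<noteq> \<kappa> 1"
  shows "exp (of_nat k / 2 * Rmat \<kappa> m m) = inverse (((\<kappa> (m + 1) - \<kappa> 1)^2)^k)"
proof -
  have "of_nat k / 2 * Rmat \<kappa> m m = - (of_nat k * ln ((\<kappa> (m + 1) - \<kappa> 1)^2))"
    by (simp add: Rmat_def)
  then show ?thesis
    using assms by (simp add: exp_minus exp_of_nat_mult)
qed

lemma exp_Rmat:
  assumes "inj_on \<kappa> {1..g+1}" "m \<in> {1..g}" "l \<in> {1..g}"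
  shows "exp (Rmat \<kappa> m l) = (if m = l then 1 else (\<kappa> (m + 1) - \<kappa> (l + 1))^2) /
    ((\<kappa> (m + 1) - \<kappa> 1)^2 * (\<kappa> (l + 1) - \<kappa> 1)^2)"
proof (cases "l = m")
  case True
  have "\<kappa> (m + 1) \<noteq> \<kappa> 1"
    using assms(1,2) by (auto dest: inj_onD)
  then have "exp (of_nat 2 / 2 * Rmat \<kappa> m m) = inverse (((\<kappa> (m + 1) - \<kappa> 1)^2)^2)"
    by (rule exp_half_multiple_Rmat_diag)
  with True show ?thesis
    by (simp add: field_simps power2_eq_square)
next
  case False
  have "(\<kappa> (m + 1) - \<kappa> (l + 1))^2 /
      ((\<kappa> (m + 1) - \<kappa> 1)^2 * (\<kappa> (l + 1) - \<kappa> 1)^2) \<noteq> 0"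
    using assms False by (auto dest: inj_onD)
  with False show ?thesis
    by (simp add: Rmat_def)
qed

lemma exp_Rmat_combination:
  assumes "inj_on \<kappa> {1..g+1}" "k \<in> {1..g}" "m \<in> {1..g}"
  shows "exp (of_nat k / 2 * Rmat \<kappa> m m - (\<Sum>l=1..k-1. Rmat \<kappa> m l)) =
    prod_sq_gaps k \<kappa> 1 / prod_sq_gaps k \<kappa> (m + 1)"
proof -
  define w where "w = (\<kappa> (m + 1) - \<kappa> 1)^2"
  define d where "d l = (\<kappa> (Suc l) - \<kappa> 1)^2" for l
  define Z where "Z l = (if m = l then 1 else (\<kappa> (Suc m) - \<kappa> (Suc l))^2)" for l
  have inj_iff: "\<kappa> a = \<kappa> b \<longleftrightarrow> a = b" if "a \<in> {1..g+1}" "b \<in> {1..g+1}" for a b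
    using assms(1) that by (rule inj_on_eq_iff)
  have "\<kappa> (m + 1) \<noteq> \<kappa> 1"
    using assms(3) by (simp add: inj_iff)
  then have "w \<noteq> 0"
    by (simp add: w_def)
  have "(\<Prod>l=1..k-1. d l) \<noteq> 0" "(\<Prod>l=1..k-1. Z l) \<noteq> 0"
    using assms(2,3) by (auto simp: d_def Z_def inj_iff)
  have gaps_1: "prod_sq_gaps k \<kappa> 1 = (\<Prod>l=1..k-1. d l)"
    using assms(2) by (simp add: prod_sq_gaps_split_first d_def power2_commute)
  have gaps_m: "prod_sq_gaps k \<kappa> (m + 1) = w * (\<Prod>l=1..k-1. Z l)"
    using assms(2,3) by (simp add: prod_sq_gaps_split_first w_def Z_def)
  have "exp (\<Sum>l=1..k-1. Rmat \<kappa> m l) = (\<Prod>l=1..k-1. exp (Rmat \<kappa> m l))"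
    by (simp add: exp_sum)
  also have "\<dots> = (\<Prod>l=1..k-1. Z l / (w * d l))"
  proof (rule prod.cong[OF refl])
    fix l assume "l \<in> {1..k-1}"
    then have "l \<in> {1..g}"
      using assms(2) by auto
    then show "exp (Rmat \<kappa> m l) = Z l / (w * d l)"
      using exp_Rmat[OF assms(1,3)] by (simp add: Z_def w_def d_def)
  qed
  also have "\<dots> = (\<Prod>l=1..k-1. Z l) / (w^(k - 1) * (\<Prod>l=1..k-1. d l))"
    by (simp add: prod_dividef prod.distrib)
  finally have exp_sum_Rmat: "exp (\<Sum>l=1..k-1. Rmat \<kappa> m l) = \<dots>" .
  have "exp (of_nat k / 2 * Rmat \<kappa> m m - (\<Sum>l=1..k-1. Rmat \<kappa> m l)) =
      exp (of_nat k / 2 * Rmat \<kappa> m m) / exp (\<Sum>l=1..k-1. Rmat \<kappa> m l)"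
    by (rule exp_diff)
  also have "\<dots> = inverse (w^k) / ((\<Prod>l=1..k-1. Z l) / (w^(k - 1) * (\<Prod>l=1..k-1. d l)))"
    unfolding exp_sum_Rmat exp_half_multiple_Rmat_diag[OF \<open>\<kappa> (m + 1) \<noteq> \<kappa> 1\<close>] w_def ..
  also have "\<dots> = (\<Prod>l=1..k-1. d l) / (w * (\<Prod>l=1..k-1. Z l))"
  proof -
    have "w^k = w * w^(k - 1)"
      using assms(2) by (cases k) auto
    then show ?thesis
      using \<open>w \<noteq> 0\<close> \<open>(\<Prod>l=1..k-1. Z l) \<noteq> 0\<close> by (simp add: field_simps)
  qed
  finally show ?thesis
    by (simp only: gaps_1 gaps_m)
qed

lemma scaled_prod_sq_gaps_eq_iff:
  assumes "inj_on \<kappa> {1..g+1}" "k \<in> {1..g}" "m \<in> {1..g}" "c \<noteq> 0"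
  shows "b * c * prod_sq_gaps k \<kappa> (m + 1) = prod_sq_gaps k \<kappa> 1 \<longleftrightarrow>
    b = inverse c * exp (of_nat k / 2 * Rmat \<kappa> m m - (\<Sum>l=1..k-1. Rmat \<kappa> m l))"
proof -
  have "prod_sq_gaps k \<kappa> (m + 1) \<noteq> 0"
    using prod_sq_gaps_nonzero[OF assms(1)] assms(2,3) by auto
  then show ?thesis
    unfolding exp_Rmat_combination[OF assms(1-3)] using assms(4) by (auto simp: field_simps)
qed

theorem proposition5p7:
  fixes g k :: nat and \<kappa> \<beta> lam :: "nat \<Rightarrow> complex"
  assumes "g \<ge> 1"
    and "k \<in> {1..g}"
    and "inj_on \<kappa> {1..g+1}"
    and "\<forall>j\<in>{1..g}. \<beta> j \<noteq> 0"
    and "\<forall>j\<in>{1..g}. lam j \<noteq> 0"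
    and "\<beta> 0 = 1" and "lam 0 = 1"
  shows "row_space k (g+1) (matA k \<kappa> \<beta>) = row_space k (g+1) (matAt \<kappa> lam) \<longleftrightarrow>
    (\<forall>j\<in>{1..g}. \<beta> j = inverse (lam j) *
        exp (of_nat k / 2 * Rmat \<kappa> j j - (\<Sum>l=1..k-1. Rmat \<kappa> j l)))"
proof -
  let ?H = "\<lambda>t. \<beta> (t - 1) * lam (t - 1) * prod_sq_gaps k \<kappa> t"
  have k: "1 \<le> k" "k < g + 1"
    using assms(2) by auto
  have "inj_on \<kappa> {1..k}"
    using assms(3) by (rule inj_on_subset) (use k in auto)
  have lam_nz: "\<forall>t\<in>{1..g+1}. lam (t - 1) \<noteq> 0"
    and beta_nz: "\<forall>t\<in>{1..g+1}. \<beta> (t - 1) \<noteq> 0"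
    using assms(4-7) unfolding Suc_eq_plus1[symmetric] ball_atLeastAtMost_Suc_iff by simp_all
  have "row_space k (g+1) (matA k \<kappa> \<beta>) = row_space k (g+1) (matAt \<kappa> lam) \<longleftrightarrow>
      (\<forall>i\<in>{1..k}. \<forall>j\<in>{k<..g+1}.
         matA k \<kappa> \<beta> i j = lam (j - 1) / lam (i - 1) * poly (lagrange_basis {1..k} \<kappa> i) (\<kappa> j))"
    using k \<open>inj_on \<kappa> {1..k}\<close> lam_nz by (intro row_space_matA_eq_matAt_iff) auto
  also have "\<dots> \<longleftrightarrow> (\<forall>i\<in>{1..k}. \<forall>j\<in>{k<..g+1}. ?H i = ?H j)"
    using lam_nz beta_nz k by (intro ball_cong refl matA_eq_lagrange_iff[OF assms(3)]) auto
  also have "\<dots> \<longleftrightarrow> (\<forall>t\<in>{1..g+1}. ?H t = ?H 1)"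
    using k by (rule eq_across_cut_iff_constant)
  also have "\<dots> \<longleftrightarrow> (\<forall>m\<in>{1..g}. ?H (m + 1) = ?H 1)"
    unfolding Suc_eq_plus1[symmetric] ball_atLeastAtMost_Suc_iff by simp
  also have "\<dots> \<longleftrightarrow> (\<forall>m\<in>{1..g}. \<beta> m = inverse (lam m) *
      exp (of_nat k / 2 * Rmat \<kappa> m m - (\<Sum>l=1..k-1. Rmat \<kappa> m l)))"
    using scaled_prod_sq_gaps_eq_iff[OF assms(3,2)] assms(5-7) by (intro ball_cong refl) simp
  finally show ?thesis .
qed

end
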